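(* Let $\bar\gamma_{\mathrm{E}}>0$, $\mathcal{R}>0$ and $\alpha>0$ be fixed, and let $\bar\gamma_{\mathrm{D}}>0$ with $\bar\gamma_{\mathrm{R}}=\alpha\bar\gamma_{\mathrm{D}}$. Let $h_{\mathrm{S},\mathrm{R}},h_{\mathrm{R},\mathrm{D}},h_{\mathrm{R},\mathrm{E}}$ be independent $\mathcal{CN}(0,1)$ random variables, and define $$\mathcal{R}^{1}_{\mathrm{R}\to\mathrm{D}}=\max\left\{\log_2\frac{1+\bar\gamma_{\mathrm{D}}|h_{\mathrm{R},\mathrm{D}}|^2}{1+\bar\gamma_{\mathrm{E}}|h_{\mathrm{R},\mathrm{E}}|^2},0\right\},\qquad \mathcal{R}^{1}_{\mathrm{S}\to\mathrm{R}}=\log_2\left(1+\bar\gamma_{\mathrm{R}}|h_{\mathrm{S},\mathrm{R}}|^2\right),$$ $\mathcal{R}_1=\max\{\min\{\mathcal{R}^{1}_{\mathrm{R}\to\mathrm{D}},\mathcal{R}^{1}_{\mathrm{S}\to\mathrm{R}}\},0\}$ and $\mathcal{P}_1=\Pr(\mathcal{R}_1<\mathcal{R})$ (a function of $\bar\gamma_{\mathrm{D}}$). Then as $\bar\gamma_{\mathrm{D}}\to\infty$, $$\mathcal{P}_1\approx\mathcal{M}_1\bar\gamma_{\mathrm{D}}^{-1},$$ in the sense that $\bar\gamma_{\mathrm{D}}\mathcal{P}_1\to\mathcal{M}_1$, where $\mathcal{M}_1=(2^{\mathcal{R}}-1)(1+1/\alpha)+2^{\mathcal{R}}\bar\ga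mma_{\mathrm{E}}>0$.
   Context: $\mathcal{CN}(0,1)$ denotes a circularly symmetric complex Gaussian random variable with zero mean and unit variance (Rayleigh fading). The quantities model a decode-and-forward relay system where the eavesdropper overhears only the relay; $\bar\gamma$'s are average SNRs, $\mathcal{R}_1$ the secrecy capacity and $\mathcal{P}_1$ the secrecy outage probability. *)

theory Defs
  imports "HOL-Probability.Probability"
begin

definition cn01_density :: "complex \<Rightarrow> real" where
  "cn01_density z = exp (- (cmod z)\<^sup>2) / pi"

definition rate_RD :: "real \<Rightarrow> real \<Rightarrow> complex \<Rightarrow> complex \<Rightarrow> real" where
  "rate_RD gD gE hRD hRE =
     max (log 2 ((1 + gD * (cmod hRD)\<^sup>2) / (1 + gE * (cmod hRE)\<^sup>2))) 0"

definition rate_SR :: "real \<Rightarrow> complex \<Rightarrow> real" where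
  "rate_SR gR hSR = log 2 (1 + gR * (cmod hSR)\<^sup>2)"

definition secrecy_rate1 ::
  "real \<Rightarrow> real \<Rightarrow> real \<Rightarrow> complex \<Rightarrow> complex \<Rightarrow> complex \<Rightarrow> real" where
  "secrecy_rate1 gD gR gE hSR hRD hRE =
     max (min (rate_RD gD gE hRD hRE) (rate_SR gR hSR)) 0"

end

theory Submission
  imports Defs "HOL-Real_Asymp.Real_Asymp"
begin

(* For h ~ CN(0,1) the power |h|^2 is standard exponential. With c = 2^R - 1 and
   d = 2^R gE, there is no outage exactly when |hSR|^2 >= c / (alpha gD) and
   |hRD|^2 >= (c + d |hRE|^2) / gD. For independent standard exponential X, Y, Z one has
   P(X >= a) = exp (-a) and P(Y >= b + k Z) = exp (-b) / (1 + k), so the outage probability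
   is exactly 1 - exp (-c / (alpha gD)) exp (-c / gD) / (1 + d / gD), and its first-order
   expansion in 1 / gD gives the limit. *)

lemma emeasure_sq_norm_annulus:
  assumes "0 \<le> t" "t \<le> s"
  shows "emeasure lborel {z::complex. t \<le> (cmod z)\<^sup>2 \<and> (cmod z)\<^sup>2 \<le> s} = ennreal (pi * (s - t))"
proof -
  have "cmod z \<le> sqrt u \<longleftrightarrow> (cmod z)\<^sup>2 \<le> u" "cmod z < sqrt u \<longleftrightarrow> (cmod z)\<^sup>2 < u" for z :: complex and u
    by (metis norm_ge_zero real_sqrt_abs abs_of_nonneg real_sqrt_le_iff real_sqrt_less_iff)+
  then have "{z::complex. t \<le> (cmod z)\<^sup>2 \<and> (cmod z)\<^sup>2 \<le> s} = cball 0 (sqrt s) - ball 0 (sqrt t)"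
    by (auto simp: not_less)
  moreover have "emeasure lborel (cball (0::complex) (sqrt s) - ball 0 (sqrt t))
      = emeasure lborel (cball (0::complex) (sqrt s)) - emeasure lborel (ball (0::complex) (sqrt t))"
    using assms by (intro emeasure_Diff)
      (auto simp: emeasure_ball intro!: order.trans[OF ball_subset_cball] cball_subset_cball_iff[THEN iffD2])
  ultimately show ?thesis
    using assms by (simp add: emeasure_ball emeasure_cball unit_ball_vol_2 ennreal_minus right_diff_distrib)
qed

lemma exp_eq_nn_integral_exponential_tail:
  assumes "c > 0"
  shows "ennreal (exp (- c * u)) = (\<integral>\<^sup>+s. ennreal (c * exp (- c * s)) * indicator {u..} s \<partial>lborel)"
proof -
  have "(\<integral>\<^sup>+s. ennreal (c * exp (- c * s)) * indicator {u..} s \<partial>lborel) = ennreal (0 - (- exp (- c * u)))"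
  proof (rule nn_integral_FTC_atLeast)
    show "((\<lambda>s. - exp (- c * s)) \<longlongrightarrow> 0) at_top"
      using assms by real_asymp
  qed (use assms in \<open>auto intro!: derivative_eq_intros\<close>)
  then show ?thesis
    by simp
qed

text \<open>Layer-cake formula: write the integrand as the tail integral of an exponential
  density and swap the integrals, so that only the Lebesgue measure of annuli is needed.\<close>
lemma nn_integral_exp_sq_norm_tail:
  assumes "c > 0" "t \<ge> 0"
  shows "(\<integral>\<^sup>+z. ennreal (exp (- c * (cmod z)\<^sup>2)) * indicator {z. t \<le> (cmod z)\<^sup>2} z \<partial>lborel)
     = ennreal (pi / c * exp (- c * t))"
proof -
  let ?e = "\<lambda>s. ennreal (c * exp (- c * s))"
  have "(\<integral>\<^sup>+z. ennreal (exp (- c * (cmod z)\<^sup>2)) * indicator {z. t \<le> (cmod z)\<^sup>2} z \<partial>lborel)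
     = (\<integral>\<^sup>+z. \<integral>\<^sup>+s. ?e s * indicator {(cmod z)\<^sup>2..} s * indicator {z. t \<le> (cmod z)\<^sup>2} z \<partial>lborel \<partial>lborel)"
    by (subst exp_eq_nn_integral_exponential_tail[OF assms(1)]) (simp add: nn_integral_multc)
  also have "\<dots> = (\<integral>\<^sup>+s. \<integral>\<^sup>+z. ?e s * indicator {(cmod z)\<^sup>2..} s * indicator {z. t \<le> (cmod z)\<^sup>2} z \<partial>lborel \<partial>lborel)"
    by (rule pair_sigma_finite.Fubini'[symmetric])
       (unfold_locales, unfold indicator_def mem_Collect_eq atLeast_iff, measurable)
  also have "\<dots> = (\<integral>\<^sup>+s. ennreal (c * exp (- c * s) * (pi * (s - t))) * indicator {t..} s \<partial>lborel)"
  proof (rule nn_integral_cong)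
    fix s :: real
    have "(\<integral>\<^sup>+z. ?e s * indicator {(cmod z)\<^sup>2..} s * indicator {z. t \<le> (cmod z)\<^sup>2} z \<partial>lborel)
      = ?e s * emeasure lborel {z::complex. t \<le> (cmod z)\<^sup>2 \<and> (cmod z)\<^sup>2 \<le> s}"
      by (subst nn_integral_indicator[symmetric], measurable, subst nn_integral_cmult[symmetric])
         (auto intro!: nn_integral_cong split: split_indicator)
    also have "\<dots> = ennreal (c * exp (- c * s) * (pi * (s - t))) * indicator {t..} s"
    proof (cases "t \<le> s")
      case False
      then have empty: "{z::complex. t \<le> (cmod z)\<^sup>2 \<and> (cmod z)\<^sup>2 \<le> s} = {}"
        by auto
      show ?thesis
        using False by (simp only: empty) simp
    qed (use assms emeasure_sq_norm_annulus[of t s] in \<open>simp add: ennreal_mult\<close>)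
    finally show "(\<integral>\<^sup>+z. ?e s * indicator {(cmod z)\<^sup>2..} s * indicator {z. t \<le> (cmod z)\<^sup>2} z \<partial>lborel)
      = ennreal (c * exp (- c * s) * (pi * (s - t))) * indicator {t..} s" .
  qed
  also have "\<dots> = ennreal (0 - (- pi * (t - t + 1/c) * exp (- c * t)))"
  proof (rule nn_integral_FTC_atLeast[where F="\<lambda>s. - pi * (s - t + 1/c) * exp (- c * s)"])
    show "((\<lambda>s. - pi * (s - t + 1/c) * exp (- c * s)) \<longlongrightarrow> 0) at_top"
      using assms by real_asymp
    show "DERIV (\<lambda>s. - pi * (s - t + 1/c) * exp (- c * s)) x :> c * exp (- c * x) * (pi * (x - t))" for x
      using assms by (auto intro!: derivative_eq_intros simp: field_simps)
  qed (use assms in auto)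
  finally show ?thesis
    by simp
qed

lemma cn01_density_borel_measurable [measurable]: "cn01_density \<in> borel_measurable borel"
  unfolding cn01_density_def[abs_def] by measurable

lemma nn_integral_cn01_sq_norm_tail:
  assumes "t \<ge> 0"
  shows "(\<integral>\<^sup>+z. ennreal (cn01_density z) * indicator {z. t \<le> (cmod z)\<^sup>2} z \<partial>lborel) = ennreal (exp (- t))"
proof -
  have "(\<integral>\<^sup>+z. ennreal (cn01_density z) * indicator {z. t \<le> (cmod z)\<^sup>2} z \<partial>lborel)
      = (\<integral>\<^sup>+z. ennreal (1 / pi) * (ennreal (exp (- 1 * (cmod z)\<^sup>2)) * indicator {z. t \<le> (cmod z)\<^sup>2} z) \<partial>lborel)"
    by (intro nn_integral_cong) (simp add: cn01_density_def divide_inverse ennreal_mult mult_ac)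
  also have "\<dots> = ennreal (1 / pi) * ennreal (pi / 1 * exp (- 1 * t))"
    using nn_integral_exp_sq_norm_tail[of 1 t] assms by (simp add: nn_integral_cmult)
  finally show ?thesis
    by (simp add: ennreal_mult[symmetric])
qed

lemma nn_integral_cn01_pair_tail:
  assumes "b \<ge> 0" "k \<ge> 0"
  shows "(\<integral>\<^sup>+p. (\<lambda>(x, y). ennreal (cn01_density x) * ennreal (cn01_density y)) p *
            indicator {p::complex \<times> complex. b + k * (cmod (snd p))\<^sup>2 \<le> (cmod (fst p))\<^sup>2} p \<partial>(lborel \<Otimes>\<^sub>M lborel))
         = ennreal (exp (- b) / (1 + k))"
proof -
  let ?B = "{p::complex \<times> complex. b + k * (cmod (snd p))\<^sup>2 \<le> (cmod (fst p))\<^sup>2}"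
  let ?f = "\<lambda>p. (\<lambda>(x, y). ennreal (cn01_density x) * ennreal (cn01_density y)) p * indicator ?B p"
  have "(\<integral>\<^sup>+p. ?f p \<partial>(lborel \<Otimes>\<^sub>M lborel)) = (\<integral>\<^sup>+v. \<integral>\<^sup>+u. ?f (u, v) \<partial>lborel \<partial>lborel)"
    by (rule pair_sigma_finite.nn_integral_snd[symmetric])
       (unfold_locales, unfold indicator_def mem_Collect_eq, measurable)
  also have "\<dots> = (\<integral>\<^sup>+v. ennreal (exp (- b) / pi) *
      (ennreal (exp (- (1 + k) * (cmod v)\<^sup>2)) * indicator {v. 0 \<le> (cmod v)\<^sup>2} v) \<partial>lborel)"
  proof (rule nn_integral_cong)
    fix v :: complex
    have "(\<integral>\<^sup>+u. ?f (u, v) \<partial>lborel) = ennreal (cn01_density v) *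
        (\<integral>\<^sup>+u. ennreal (cn01_density u) * indicator {u. b + k * (cmod v)\<^sup>2 \<le> (cmod u)\<^sup>2} u \<partial>lborel)"
      by (subst nn_integral_cmult[symmetric])
         (auto intro!: nn_integral_cong simp: mult.commute split: split_indicator)
    also have "\<dots> = ennreal (cn01_density v) * ennreal (exp (- (b + k * (cmod v)\<^sup>2)))"
      using assms by (simp add: nn_integral_cn01_sq_norm_tail)
    also have "\<dots> = ennreal (exp (- b) / pi) *
        (ennreal (exp (- (1 + k) * (cmod v)\<^sup>2)) * indicator {v. 0 \<le> (cmod v)\<^sup>2} v)"
      by (simp add: cn01_density_def ennreal_mult[symmetric] mult_exp_exp field_simps)
    finally show "(\<integral>\<^sup>+u. ?f (u, v) \<partial>lborel) = ennreal (exp (- b) / pi) *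
        (ennreal (exp (- (1 + k) * (cmod v)\<^sup>2)) * indicator {v. 0 \<le> (cmod v)\<^sup>2} v)" .
  qed
  also have "\<dots> = ennreal (exp (- b) / pi) * ennreal (pi / (1 + k) * exp (- (1 + k) * 0))"
    using nn_integral_exp_sq_norm_tail[of "1 + k" 0] assms by (simp add: nn_integral_cmult)
  finally show ?thesis
    using assms by (simp add: ennreal_mult[symmetric])
qed

text \<open>The first variable is paired with a constant because indep_var requires both
  random variables to take values in the same type.\<close>
lemma (in prob_space) indep_vars_list3_split:
  fixes X Y Z :: "'a \<Rightarrow> 'b::euclidean_space"
  assumes "indep_vars (\<lambda>_. borel) (\<lambda>i. [X, Y, Z] ! i) {0..<3}"
  shows "indep_var (lborel \<Otimes>\<^sub>M lborel) (\<lambda>\<omega>. (X \<omega>, 0)) (lborel \<Otimes>\<^sub>M lborel) (\<lambda>\<omega>. (Y \<omega>, Z \<omega>))"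
    and "indep_var lborel Y lborel Z"
proof -
  let ?r = "\<lambda>A \<omega>. restrict (\<lambda>i. ([X, Y, Z] ! i) \<omega>) A"
  have first: "(\<lambda>f. (f 0, 0)) \<circ> ?r {0} = (\<lambda>\<omega>. (X \<omega>, 0))"
    and rest: "(\<lambda>f. (f 1, f 2)) \<circ> ?r {1, 2} = (\<lambda>\<omega>. (Y \<omega>, Z \<omega>))"
    and second: "(\<lambda>f. f 1) \<circ> ?r {1} = Y" and third: "(\<lambda>f. f 2) \<circ> ?r {2} = Z"
    by (auto simp: fun_eq_iff numeral_2_eq_2)
  have "indep_var (lborel \<Otimes>\<^sub>M lborel) ((\<lambda>f. (f 0, 0)) \<circ> ?r {0})
      (lborel \<Otimes>\<^sub>M lborel) ((\<lambda>f. (f 1, f 2)) \<circ> ?r {1, 2})"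
    by (rule indep_var_compose[OF indep_var_restrict[OF assms]])
       (auto intro!: measurable_Pair measurable_component_singleton)
  then show "indep_var (lborel \<Otimes>\<^sub>M lborel) (\<lambda>\<omega>. (X \<omega>, 0)) (lborel \<Otimes>\<^sub>M lborel) (\<lambda>\<omega>. (Y \<omega>, Z \<omega>))"
    unfolding first rest .
  have "indep_var lborel ((\<lambda>f. f 1) \<circ> ?r {1}) lborel ((\<lambda>f. f 2) \<circ> ?r {2})"
    by (rule indep_var_compose[OF indep_var_restrict[OF assms]])
       (auto intro!: measurable_component_singleton)
  then show "indep_var lborel Y lborel Z"
    unfolding second third .
qed

lemma (in prob_space) prob_cn01_sq_norm_tails:
  fixes X Y Z :: "'a \<Rightarrow> complex"
  assumes indep: "indep_vars (\<lambda>_. borel) (\<lambda>i. [X, Y, Z] ! i) {0..<3}"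
    and X: "distributed M lborel X (\<lambda>z. ennreal (cn01_density z))"
    and Y: "distributed M lborel Y (\<lambda>z. ennreal (cn01_density z))"
    and Z: "distributed M lborel Z (\<lambda>z. ennreal (cn01_density z))"
    and "a \<ge> 0" "b \<ge> 0" "k \<ge> 0"
  shows "prob {\<omega> \<in> space M. a \<le> (cmod (X \<omega>))\<^sup>2 \<and> b + k * (cmod (Z \<omega>))\<^sup>2 \<le> (cmod (Y \<omega>))\<^sup>2}
         = exp (- a) * (exp (- b) / (1 + k))"
proof -
  let ?A = "{z::complex. a \<le> (cmod z)\<^sup>2} \<times> (UNIV :: complex set)"
  let ?B = "{p::complex \<times> complex. b + k * (cmod (snd p))\<^sup>2 \<le> (cmod (fst p))\<^sup>2}"
  have "Measurable.pred (lborel \<Otimes>\<^sub>M lborel) (\<lambda>p::complex \<times> complex. a \<le> (cmod (fst p))\<^sup>2)"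
    and "Measurable.pred (lborel \<Otimes>\<^sub>M lborel) (\<lambda>p::complex \<times> complex. b + k * (cmod (snd p))\<^sup>2 \<le> (cmod (fst p))\<^sup>2)"
    by measurable
  then have sets_A: "?A \<in> sets (lborel \<Otimes>\<^sub>M lborel)" and sets_B: "?B \<in> sets (lborel \<Otimes>\<^sub>M lborel)"
    by (auto simp: pred_def space_pair_measure elim: back_subst[of "\<lambda>S. S \<in> _"])
  have joint: "distributed M (lborel \<Otimes>\<^sub>M lborel) (\<lambda>\<omega>. (Y \<omega>, Z \<omega>))
      (\<lambda>(x, y). ennreal (cn01_density x) * ennreal (cn01_density y))"
    using indep_vars_list3_split(2)[OF indep]
    by (intro distributed_joint_indep[OF _ _ Y Z]) (auto intro: lborel.sigma_finite_measure_axioms)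
  have "emeasure M ((\<lambda>\<omega>. (Y \<omega>, Z \<omega>)) -` ?B \<inter> space M) = ennreal (exp (- b) / (1 + k))"
    using distributed_emeasure[OF joint sets_B] nn_integral_cn01_pair_tail[OF \<open>b \<ge> 0\<close> \<open>k \<ge> 0\<close>]
    by simp
  then have prob_B: "prob ((\<lambda>\<omega>. (Y \<omega>, Z \<omega>)) -` ?B \<inter> space M) = exp (- b) / (1 + k)"
    using \<open>k \<ge> 0\<close> by (simp add: measure_def)
  have "emeasure M (X -` {z. a \<le> (cmod z)\<^sup>2} \<inter> space M) = ennreal (exp (- a))"
    using distributed_emeasure[OF X, of "{z. a \<le> (cmod z)\<^sup>2}"] nn_integral_cn01_sq_norm_tail[OF \<open>a \<ge> 0\<close>]
    by (simp add: pred_def[symmetric])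
  then have prob_A: "prob ((\<lambda>\<omega>. (X \<omega>, 0)) -` ?A \<inter> space M) = exp (- a)"
    by (simp add: measure_def vimage_def)
  have "{\<omega> \<in> space M. a \<le> (cmod (X \<omega>))\<^sup>2 \<and> b + k * (cmod (Z \<omega>))\<^sup>2 \<le> (cmod (Y \<omega>))\<^sup>2}
      = (\<lambda>\<omega>. ((X \<omega>, 0), (Y \<omega>, Z \<omega>))) -` (?A \<times> ?B) \<inter> space M"
    by auto
  also have "prob \<dots> = prob ((\<lambda>\<omega>. (X \<omega>, 0)) -` ?A \<inter> space M) * prob ((\<lambda>\<omega>. (Y \<omega>, Z \<omega>)) -` ?B \<inter> space M)"
    by (rule indep_varD[OF indep_vars_list3_split(1)[OF indep] sets_A sets_B])
  also have "\<dots> = exp (- a) * (exp (- b) / (1 + k))"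
    unfolding prob_A prob_B ..
  finally show ?thesis .
qed

lemma rate_SR_less_iff:
  assumes "gR > 0"
  shows "rate_SR gR h < R \<longleftrightarrow> (cmod h)\<^sup>2 < (2 powr R - 1) / gR"
proof -
  have "rate_SR gR h < R \<longleftrightarrow> 1 + gR * (cmod h)\<^sup>2 < 2 powr R"
    unfolding rate_SR_def using assms by (simp add: log_less_iff add_pos_nonneg)
  also have "\<dots> \<longleftrightarrow> (cmod h)\<^sup>2 < (2 powr R - 1) / gR"
    using assms by (simp add: pos_less_divide_eq mult.commute add.commute less_diff_eq)
  finally show ?thesis .
qed

lemma rate_RD_less_iff:
  assumes "gD > 0" "gE \<ge> 0" "R > 0"
  shows "rate_RD gD gE h h' < R \<longleftrightarrow> (cmod h)\<^sup>2 < (2 powr R - 1) / gD + 2 powr R * gE / gD * (cmod h')\<^sup>2"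
proof -
  have pos: "1 + gE * (cmod h')\<^sup>2 > 0" "1 + gD * (cmod h)\<^sup>2 > 0"
    using assms by (simp_all add: add_pos_nonneg)
  have "rate_RD gD gE h h' < R \<longleftrightarrow> (1 + gD * (cmod h)\<^sup>2) / (1 + gE * (cmod h')\<^sup>2) < 2 powr R"
    unfolding rate_RD_def using assms pos by (simp add: log_less_iff)
  also have "\<dots> \<longleftrightarrow> gD * (cmod h)\<^sup>2 < (2 powr R - 1) + 2 powr R * gE * (cmod h')\<^sup>2"
    using pos by (simp add: pos_divide_less_eq algebra_simps)
  also have "\<dots> \<longleftrightarrow> (cmod h)\<^sup>2 < ((2 powr R - 1) + 2 powr R * gE * (cmod h')\<^sup>2) / gD"
    using assms by (simp add: pos_less_divide_eq mult.commute)
  also have "\<dots> \<longleftrightarrow> (cmod h)\<^sup>2 < (2 powr R - 1) / gD + 2 powr R * gE / gD * (cmod h')\<^sup>2"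
    by (simp add: add_divide_distrib times_divide_eq_left)
  finally show ?thesis .
qed

lemma secrecy_rate1_less_iff:
  assumes "R > 0"
  shows "secrecy_rate1 gD gR gE hSR hRD hRE < R \<longleftrightarrow> rate_RD gD gE hRD hRE < R \<or> rate_SR gR hSR < R"
  unfolding secrecy_rate1_def using assms by auto

lemma (in prob_space) secrecy_outage_probability_eq:
  fixes hSR hRD hRE :: "'a \<Rightarrow> complex"
  assumes indep: "indep_vars (\<lambda>_. borel) (\<lambda>i. [hSR, hRD, hRE] ! i) {0..<3}"
    and SR: "distributed M lborel hSR (\<lambda>z. ennreal (cn01_density z))"
    and RD: "distributed M lborel hRD (\<lambda>z. ennreal (cn01_density z))"
    and RE: "distributed M lborel hRE (\<lambda>z. ennreal (cn01_density z))"
    and "gD > 0" "\<alpha> > 0" "gE > 0" "R > 0"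
  defines "c \<equiv> 2 powr R - 1" and "d \<equiv> 2 powr R * gE"
  shows "prob {\<omega> \<in> space M. secrecy_rate1 gD (\<alpha> * gD) gE (hSR \<omega>) (hRD \<omega>) (hRE \<omega>) < R}
         = 1 - exp (- (c / (\<alpha> * gD))) * (exp (- (c / gD)) / (1 + d / gD))"
proof -
  have [measurable]: "hSR \<in> borel_measurable M" "hRD \<in> borel_measurable M" "hRE \<in> borel_measurable M"
    using SR RD RE by (auto dest: distributed_measurable)
  let ?G = "{\<omega> \<in> space M. c / (\<alpha> * gD) \<le> (cmod (hSR \<omega>))\<^sup>2 \<and>
      c / gD + d / gD * (cmod (hRE \<omega>))\<^sup>2 \<le> (cmod (hRD \<omega>))\<^sup>2}"
  have "{\<omega> \<in> space M. secrecy_rate1 gD (\<alpha> * gD) gE (hSR \<omega>) (hRD \<omega>) (hRE \<omega>) < R} = space M - ?G"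
    using assms by (auto simp: secrecy_rate1_less_iff rate_RD_less_iff rate_SR_less_iff not_less)
  moreover have "?G \<in> events"
    by measurable
  ultimately have "prob {\<omega> \<in> space M. secrecy_rate1 gD (\<alpha> * gD) gE (hSR \<omega>) (hRD \<omega>) (hRE \<omega>) < R}
      = 1 - prob ?G"
    by (simp add: prob_compl)
  also have "prob ?G = exp (- (c / (\<alpha> * gD))) * (exp (- (c / gD)) / (1 + d / gD))"
  proof (rule prob_cn01_sq_norm_tails[OF indep SR RD RE])
    have "c > 0" "d > 0"
      using assms by simp_all
    then show "0 \<le> c / (\<alpha> * gD)" "0 \<le> c / gD" "0 \<le> d / gD"
      using \<open>gD > 0\<close> \<open>\<alpha> > 0\<close> by simp_all
  qed
  finally show ?thesis .
qed

lemma tendsto_secrecy_outage_scaled: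
  fixes c d \<alpha> :: real
  assumes "\<alpha> > 0"
  shows "((\<lambda>g. g * (1 - exp (- (c / (\<alpha> * g))) * (exp (- (c / g)) / (1 + d / g))))
           \<longlongrightarrow> c * (1 + 1 / \<alpha>) + d) at_top"
proof -
  \<comment> \<open>real_asymp only closes the goal with the limit in the normal form it computes\<close>
  have "((\<lambda>g. g * (1 - exp (- (c / (\<alpha> * g))) * (exp (- (c / g)) / (1 + d / g))))
           \<longlongrightarrow> c * inverse \<alpha> - (- d - c)) at_top"
    using assms by real_asymp
  moreover have "c * inverse \<alpha> - (- d - c) = c * (1 + 1 / \<alpha>) + d"
    by (simp add: field_simps)
  ultimately show ?thesis
    by simp
qed

theorem theorem2:
  fixes M :: "'a measure"
    and hSR hRD hRE :: "'a \<Rightarrow> complex"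
    and gE R \<alpha> :: real
  assumes "prob_space M"
    and "gE > 0" and "R > 0" and "\<alpha> > 0"
    and "prob_space.indep_vars M (\<lambda>_. borel) (\<lambda>i. [hSR, hRD, hRE] ! i) {0..<3}"
    and "distributed M lborel hSR (\<lambda>z. ennreal (cn01_density z))"
    and "distributed M lborel hRD (\<lambda>z. ennreal (cn01_density z))"
    and "distributed M lborel hRE (\<lambda>z. ennreal (cn01_density z))"
  shows "((\<lambda>gD. gD * measure M {\<omega> \<in> space M.
              secrecy_rate1 gD (\<alpha> * gD) gE (hSR \<omega>) (hRD \<omega>) (hRE \<omega>) < R})
           \<longlongrightarrow> (2 powr R - 1) * (1 + 1 / \<alpha>) + 2 powr R * gE) at_top
         \<and> (2 powr R - 1) * (1 + 1 / \<alpha>) + 2 powr R * gE > 0"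
proof
  interpret prob_space M by fact
  let ?c = "2 powr R - 1" and ?d = "2 powr R * gE"
  have "\<forall>\<^sub>F gD in at_top. gD * (1 - exp (- (?c / (\<alpha> * gD))) * (exp (- (?c / gD)) / (1 + ?d / gD)))
      = gD * prob {\<omega> \<in> space M. secrecy_rate1 gD (\<alpha> * gD) gE (hSR \<omega>) (hRD \<omega>) (hRE \<omega>) < R}"
    using eventually_gt_at_top[of 0]
    by eventually_elim (simp add: secrecy_outage_probability_eq assms)
  with tendsto_secrecy_outage_scaled[OF \<open>\<alpha> > 0\<close>]
  show "((\<lambda>gD. gD * prob {\<omega> \<in> space M. secrecy_rate1 gD (\<alpha> * gD) gE (hSR \<omega>) (hRD \<omega>) (hRE \<omega>) < R})
      \<longlongrightarrow> ?c * (1 + 1 / \<alpha>) + ?d) at_top"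
    by (rule Lim_transform_eventually)
  show "?c * (1 + 1 / \<alpha>) + ?d > 0"
    using assms by (simp add: add_pos_pos)
qed

end
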